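(* Let $\mathcal{X}$ be finite and let $V_n:\mathcal{X}^n\rightsquigarrow\mathcal{Y}_n$ ($\mathcal{Y}_n$ countable) be a channel sequence, with $\overline{p}_n$ a distribution on $\mathcal{X}^n$ attaining $\mathbf{I}(V_n)=\max_p\mathbf{I}(V_n,p)$. Let $\varphi_n=-\log_2\inf\big(\{V_n(y|x)\}_{x,y}\setminus\{0\}\big)\ge0$. For a sequence $\delta_n\in[0,1]$ define $\hat p_n(x)=(1-\delta_n)\overline{p}_n(x)+\delta_n/|\mathcal{X}|^n$. Then $\mathbf{I}(V_n)-\mathbf{I}(V_n,\hat p_n)=O(\delta_n(n+\varphi_n))$. In particular, if $\delta_n=o(1/\varphi_n)$ and $\delta_n=o(1)$, and the limit $\mathbf{I}(V)=\lim_n\mathbf{I}(V_n)/n$ exists, then $\lim_{n\to\infty}\mathbf{I}(V_n,\hat p_n)/n=\mathbf{I}(V)$; and if $\delta_n=o(1/\varphi_n)$ and $\delta_n=o(1/n)$, then $\lim_{n\to\infty}[\mathbf{I}(V_n)-\mathbf{I}(V_n,\hat p_n)]=0$.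
   Context: A channel $W:\mathcal{A}\rightsquigarrow\mathcal{B}$ is a family of probability distributions $W(\cdot|a)$ on $\mathcal{B}$. For a distribution $p$: $p\bullet W(b)=\sum_a p(a)W(b|a)$; $\mathbf{i}(W,p,a,b)=\log_2\frac{W(b|a)}{p\bullet W(b)}$ if $W(b|a)>0$ and $p\bullet W(b)>0$, else $0$; $\mathbf{I}(W,p)=\sum_{a,b}p(a)W(b|a)\mathbf{i}(W,p,a,b)$, $\mathbf{I}(W)=\max_p\mathbf{I}(W,p)$. $a_n=O(b_n)$ means $|a_n|\le Cb_n$ for some constant $C$ and all large $n$; $a_n=o(b_n)$ means $a_n/b_n\to0$. *)

theory Defs
  imports "HOL-Analysis.Analysis"
begin

definition is_channel :: "'a set \<Rightarrow> ('a \<Rightarrow> 'b \<Rightarrow> real) \<Rightarrow> bool" where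
  "is_channel A W \<longleftrightarrow> (\<forall>a\<in>A. (\<forall>b. W a b \<ge> 0) \<and> (W a has_sum 1) UNIV)"

definition dists :: "'a set \<Rightarrow> ('a \<Rightarrow> real) set" where
  "dists A = {p. (\<forall>a\<in>A. p a \<ge> 0) \<and> sum p A = 1}"

definition outdist :: "'a set \<Rightarrow> ('a \<Rightarrow> 'b \<Rightarrow> real) \<Rightarrow> ('a \<Rightarrow> real) \<Rightarrow> 'b \<Rightarrow> real" where
  "outdist A W p b = (\<Sum>a\<in>A. p a * W a b)"

definition infdens :: "'a set \<Rightarrow> ('a \<Rightarrow> 'b \<Rightarrow> real) \<Rightarrow> ('a \<Rightarrow> real) \<Rightarrow> 'a \<Rightarrow> 'b \<Rightarrow> real" where
  "infdens A W p a b =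
     (if W a b > 0 \<and> outdist A W p b > 0 then log 2 (W a b / outdist A W p b) else 0)"

definition mutinf :: "'a set \<Rightarrow> ('a \<Rightarrow> 'b \<Rightarrow> real) \<Rightarrow> ('a \<Rightarrow> real) \<Rightarrow> real" where
  "mutinf A W p = (\<Sum>\<^sub>\<infinity>(a,b)\<in>A \<times> UNIV. p a * W a b * infdens A W p a b)"

definition capacity :: "'a set \<Rightarrow> ('a \<Rightarrow> 'b \<Rightarrow> real) \<Rightarrow> real" where
  "capacity A W = (SUP p\<in>dists A. mutinf A W p)"

definition minprob :: "'a set \<Rightarrow> ('a \<Rightarrow> 'b \<Rightarrow> real) \<Rightarrow> real" where
  "minprob A W = Inf {W a b | a b. a \<in> A \<and> W a b \<noteq> 0}"

definition phi :: "'a set \<Rightarrow> ('a \<Rightarrow> 'b \<Rightarrow> real) \<Rightarrow> ereal" where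
  "phi A W = (if minprob A W > 0 then ereal (- log 2 (minprob A W)) else \<infinity>)"

text \<open>The input alphabet X^n: lists of length n over the finite type 'a.\<close>
definition seqs :: "nat \<Rightarrow> 'a list set" where
  "seqs n = {xs. length xs = n}"

end

theory Submission
  imports Defs
begin

(* Mixing the optimal input p with the uniform distribution u costs little information because
   mutual information is concave in the input: I(W, (1 - d) p + d u) >= (1 - d) I(W, p).
   Hence the capacity gap is at most d I(W, p) <= d log |X^n| = d n log |X|, which is
   O(d (n + phi)) as phi >= 0, and the two limit statements follow by squeezing.
   Concavity and the bound I(W, p) <= H(p) <= log |X^n| are proved termwise from
   ln x <= x - 1, so only absolutely summable series over the countable output alphabet occur. *)

lemma has_sum_sum:
  fixes f :: "'i \<Rightarrow> 'x \<Rightarrow> 'a::topological_comm_monoid_add"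
  assumes "finite I" "\<And>i. i \<in> I \<Longrightarrow> (f i has_sum s i) B"
  shows "((\<lambda>x. \<Sum>i\<in>I. f i x) has_sum (\<Sum>i\<in>I. s i)) B"
  using assms by (induction I rule: finite_induct) (auto intro: has_sum_add)

lemma has_sum_diff:
  fixes f g :: "'x \<Rightarrow> 'a::topological_ab_group_add"
  assumes "(f has_sum a) B" "(g has_sum b) B"
  shows "((\<lambda>x. f x - g x) has_sum (a - b)) B"
  using has_sum_add[OF assms(1), of "\<lambda>x. - g x" "- b"] assms(2) by (simp add: has_sum_uminus)

lemma has_sum_finite_Times_UNIV:
  fixes f :: "'a \<Rightarrow> 'b \<Rightarrow> 'c::topological_comm_monoid_add"
  assumes "finite A" "\<And>a. a \<in> A \<Longrightarrow> (f a has_sum s a) UNIV"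
  shows "((\<lambda>(a, b). f a b) has_sum (\<Sum>a\<in>A. s a)) (A \<times> UNIV)"
proof -
  have eq: "A \<times> UNIV = (\<Union>a\<in>A. {a} \<times> UNIV)" by auto
  have "((\<lambda>(a, b). f a b) has_sum s a) ({a} \<times> UNIV)" if "a \<in> A" for a
  proof -
    have "((\<lambda>(a, b). f a b) has_sum s a) (Pair a ` UNIV)"
      using has_sum_reindex[of "Pair a" UNIV "\<lambda>(a, b). f a b" "s a"] assms(2)[OF that]
      by (simp add: inj_on_def comp_def)
    moreover have "{a} \<times> UNIV = Pair a ` UNIV" by auto
    ultimately show ?thesis by metis
  qed
  then show ?thesis unfolding eq by (intro sum_has_sum assms(1)) auto
qed

lemma
  assumes "is_channel A W" "a \<in> A"
  shows is_channel_nonneg: "0 \<le> W a b"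
    and is_channel_has_sum: "(W a has_sum 1) UNIV"
    and is_channel_le_1: "W a b \<le> 1"
proof -
  show "0 \<le> W a b" "(W a has_sum 1) UNIV" using assms unfolding is_channel_def by auto
  then show "W a b \<le> 1"
    using finite_sum_le_has_sum[where f="W a" and S=1 and A=UNIV and B="{b}"] assms
    unfolding is_channel_def by auto
qed

lemma dists_nonneg: "q \<in> dists A \<Longrightarrow> a \<in> A \<Longrightarrow> 0 \<le> q a"
  unfolding dists_def by auto

lemma dists_le_1: "finite A \<Longrightarrow> q \<in> dists A \<Longrightarrow> a \<in> A \<Longrightarrow> q a \<le> 1"
  unfolding dists_def using member_le_sum[of a A q] by auto

lemma mixture_in_dists:
  assumes "finite A" "p \<in> dists A" "u \<in> dists A" "0 \<le> d" "d \<le> 1"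
  shows "(\<lambda>x. (1 - d) * p x + d * u x) \<in> dists A"
  using assms unfolding dists_def by (auto simp: sum.distrib sum_distrib_left[symmetric])

lemma uniform_in_dists: "finite A \<Longrightarrow> A \<noteq> {} \<Longrightarrow> (\<lambda>_. 1 / real (card A)) \<in> dists A"
  unfolding dists_def by simp

lemma outdist_has_sum:
  assumes "finite A" "is_channel A W" "q \<in> dists A"
  shows "(outdist A W q has_sum 1) UNIV"
proof -
  have "((\<lambda>b. \<Sum>a\<in>A. q a * W a b) has_sum (\<Sum>a\<in>A. q a * 1)) UNIV"
    by (intro has_sum_sum assms(1) has_sum_cmult_right is_channel_has_sum[OF assms(2)])
  then show ?thesis using assms(3) unfolding dists_def outdist_def[abs_def] by simp
qed

lemma outdist_ge:
  assumes "finite A" "is_channel A W" "q \<in> dists A" "a \<in> A"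
  shows "q a * W a b \<le> outdist A W q b"
  unfolding outdist_def using assms
  by (intro member_le_sum mult_nonneg_nonneg) (auto intro: dists_nonneg is_channel_nonneg)

lemma outdist_nonneg:
  assumes "is_channel A W" "q \<in> dists A"
  shows "0 \<le> outdist A W q b"
  unfolding outdist_def using assms
  by (intro sum_nonneg mult_nonneg_nonneg) (auto intro: dists_nonneg is_channel_nonneg)

definition log_ratio :: "real \<Rightarrow> real \<Rightarrow> real" where
  "log_ratio w y = (if 0 < w \<and> 0 < y then log 2 (w / y) else 0)"

lemma infdens_eq_log_ratio: "infdens A W q a b = log_ratio (W a b) (outdist A W q b)"
  by (simp add: infdens_def log_ratio_def)

lemma mult_log_ge_diff:
  fixes w y :: real
  assumes "0 < w" "0 < y"
  shows "(w - y) / ln 2 \<le> w * log 2 (w / y)"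
proof -
  have "ln (y / w) \<le> y / w - 1" using assms by (intro ln_le_minus_one) simp
  then have "w - y \<le> w * ln (w / y)"
    using assms by (simp add: ln_div field_simps)
  then show ?thesis by (simp add: log_def divide_right_mono)
qed

lemma mult_log_ratio_ge_diff:
  fixes t w y :: real
  assumes "0 \<le> t" "0 \<le> w" "t * w \<le> y"
  shows "t * (w - y) / ln 2 \<le> t * w * log_ratio w y"
proof (cases "t * w = 0")
  case True
  then have "t * (w - y) = - (t * y)" by (simp add: right_diff_distrib)
  moreover have "0 \<le> t * y" using assms True by simp
  ultimately have "t * (w - y) / ln 2 \<le> 0" by (simp add: divide_nonpos_pos)
  moreover have "t * w * log_ratio w y = 0" using True by simp
  ultimately show ?thesis by linarith
next
  case False
  then have "0 < t" "0 < w" using assms by auto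
  then have "0 < y" using assms by (smt (verit) mult_pos_pos)
  have "t * ((w - y) / ln 2) \<le> t * (w * log 2 (w / y))"
    by (rule mult_left_mono[OF mult_log_ge_diff[OF \<open>0 < w\<close> \<open>0 < y\<close>]]) (use assms in simp)
  then show ?thesis using \<open>0 < w\<close> \<open>0 < y\<close> by (simp add: log_ratio_def mult.assoc)
qed

lemma mult_log_ratio_change_reference:
  fixes t s w z y :: real
  assumes "0 \<le> t" "0 \<le> s" "0 \<le> w" "s * w \<le> z" "t * s * w \<le> y"
  shows "t * (s * w * log_ratio w z + (s * w - s * w / z * y) / ln 2) \<le> t * s * w * log_ratio w y"
proof (cases "t * s * w = 0")
  case True
  then show ?thesis by auto
next
  case False
  then have pos: "0 < t" "0 < s" "0 < w" using assms by auto
  then have "0 < z" "0 < y" using assms False by (smt (verit) mult_pos_pos)+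
  have "(s * w - s * w / z * y) / ln 2 = s * w / z * ((z - y) / ln 2)"
    using \<open>0 < z\<close> by (simp add: field_simps)
  also have "\<dots> \<le> s * w / z * (z * log 2 (z / y))"
    using mult_log_ge_diff[OF \<open>0 < z\<close> \<open>0 < y\<close>] pos \<open>0 < z\<close> by (intro mult_left_mono) auto
  also have "\<dots> = s * w * log 2 (z / y)"
    using \<open>0 < z\<close> by simp
  finally have "s * w * log_ratio w z + (s * w - s * w / z * y) / ln 2 \<le> s * w * log_ratio w y"
    using pos \<open>0 < z\<close> \<open>0 < y\<close> by (simp add: log_ratio_def log_divide algebra_simps)
  then show ?thesis using pos by (simp add: mult.assoc mult_left_mono)
qed

lemma abs_mult_log_ratio_le:
  fixes t w y :: real
  assumes "0 \<le> t" "t \<le> 1" "0 \<le> w" "t * w \<le> y"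
  shows "\<bar>t * w * log_ratio w y\<bar> \<le> (w + y) / ln 2"
proof (cases "0 < w \<and> 0 < y")
  case True
  have "t * w * ln (w / y) \<le> t * w * (w / y)"
    using ln_le_minus_one[of "w / y"] True assms by (intro mult_left_mono) auto
  also have "\<dots> = t * w / y * w" by simp
  also have "\<dots> \<le> w" using assms True by (intro mult_left_le_one_le) auto
  finally have "t * w * log_ratio w y \<le> w / ln 2"
    using True by (simp add: log_ratio_def log_def divide_right_mono)
  moreover have "- y \<le> t * (w - y)"
    using assms by (smt (verit) mult_left_le_one_le mult_nonneg_nonneg right_diff_distrib)
  then have "- y / ln 2 \<le> t * w * log_ratio w y"
    using mult_log_ratio_ge_diff[OF assms(1,3,4)] by (smt (verit) divide_right_mono ln_gt_zero)
  moreover have "0 \<le> w / ln 2" "0 \<le> y / ln 2" using True by auto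
  ultimately show ?thesis unfolding abs_le_iff add_divide_distrib by linarith
next
  case False
  moreover have "0 \<le> y" using assms by (smt (verit) mult_nonneg_nonneg)
  ultimately show ?thesis using assms by (auto simp: log_ratio_def)
qed

lemma log_ratio_le_minus_log:
  fixes t w y :: real
  assumes "0 < t" "t \<le> 1" "t * w \<le> y"
  shows "log_ratio w y \<le> - log 2 t"
proof (cases "0 < w \<and> 0 < y")
  case True
  then have "w / y \<le> 1 / t" using assms by (simp add: field_simps mult.commute)
  then have "log 2 (w / y) \<le> log 2 (1 / t)" using True assms by simp
  then show ?thesis using True assms by (simp add: log_ratio_def log_divide)
next
  case False
  then show ?thesis using assms by (auto simp: log_ratio_def)
qed

lemma infdens_term_summable:
  assumes "finite A" "is_channel A W" "q \<in> dists A" "a \<in> A"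
  shows "(\<lambda>b. q a * W a b * infdens A W q a b) summable_on UNIV"
proof -
  have "((\<lambda>b. (W a b + outdist A W q b) / ln 2) has_sum ((1 + 1) / ln 2)) UNIV"
    using is_channel_has_sum[OF assms(2,4)] outdist_has_sum[OF assms(1-3)]
    by (intro has_sum_divide_const has_sum_add)
  then have "(\<lambda>b. norm (q a * W a b * infdens A W q a b)) summable_on UNIV"
  proof (rule summable_on_comparison_test[OF has_sum_imp_summable])
    show "norm (q a * W a b * infdens A W q a b) \<le> (W a b + outdist A W q b) / ln 2" for b
      unfolding infdens_eq_log_ratio real_norm_def
      by (intro abs_mult_log_ratio_le dists_nonneg[OF assms(3,4)] dists_le_1[OF assms(1,3,4)]
          is_channel_nonneg[OF assms(2,4)] outdist_ge[OF assms])
  qed simp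
  then show ?thesis using summable_on_iff_abs_summable_on_real by blast
qed

lemma mutinf_eq_sum:
  assumes "finite A" "is_channel A W" "q \<in> dists A"
  shows "mutinf A W q = (\<Sum>a\<in>A. \<Sum>\<^sub>\<infinity>b. q a * W a b * infdens A W q a b)"
  unfolding mutinf_def
  by (intro infsumI has_sum_finite_Times_UNIV assms(1) has_sum_infsum infdens_term_summable assms)

lemma entropy_term_le:
  fixes x N :: real
  assumes "0 \<le> x" "0 < N"
  shows "x * - log 2 x \<le> x * log 2 N + (1 / N - x) / ln 2"
proof (cases "x = 0")
  case True
  then show ?thesis using assms by simp
next
  case False
  then have "0 < x" using assms by simp
  have "x * (- ln x - ln N) = x * ln (1 / (x * N))"
    using \<open>0 < x\<close> assms by (simp add: ln_div ln_mult)
  also have "\<dots> \<le> x * (1 / (x * N) - 1)"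
    using \<open>0 < x\<close> assms by (intro mult_left_mono ln_le_minus_one) auto
  finally have "x * - ln x \<le> x * ln N + (1 / N - x)"
    using \<open>0 < x\<close> by (simp add: field_simps)
  then have "x * - ln x / ln 2 \<le> (x * ln N + (1 / N - x)) / ln 2"
    by (rule divide_right_mono) simp
  then show ?thesis by (simp add: log_def add_divide_distrib)
qed

lemma entropy_le_log_card:
  assumes "finite A" "A \<noteq> {}" "q \<in> dists A"
  shows "(\<Sum>a\<in>A. q a * - log 2 (q a)) \<le> log 2 (real (card A))"
proof -
  define N where "N = real (card A)"
  have "0 < N" using assms unfolding N_def by (simp add: card_gt_0_iff)
  have "(\<Sum>a\<in>A. q a * - log 2 (q a)) \<le> (\<Sum>a\<in>A. q a * log 2 N + (1 / N - q a) / ln 2)"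
    by (intro sum_mono entropy_term_le \<open>0 < N\<close> dists_nonneg[OF assms(3)])
  also have "\<dots> = (\<Sum>a\<in>A. q a) * log 2 N + (N * (1 / N) - (\<Sum>a\<in>A. q a)) / ln 2"
    by (simp add: sum.distrib sum_distrib_right sum_subtractf sum_divide_distrib[symmetric] N_def)
  also have "\<dots> = log 2 N"
    using assms(3) \<open>0 < N\<close> unfolding dists_def by simp
  finally show ?thesis unfolding N_def .
qed

lemma mutinf_le_entropy:
  assumes "finite A" "is_channel A W" "q \<in> dists A"
  shows "mutinf A W q \<le> (\<Sum>a\<in>A. q a * - log 2 (q a))"
  unfolding mutinf_eq_sum[OF assms]
proof (rule sum_mono)
  fix a assume "a \<in> A"
  show "(\<Sum>\<^sub>\<infinity>b. q a * W a b * infdens A W q a b) \<le> q a * - log 2 (q a)"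
  proof (cases "q a = 0")
    case True
    then show ?thesis by simp
  next
    case False
    then have "0 < q a" using dists_nonneg[OF assms(3) \<open>a \<in> A\<close>] by simp
    have "((\<lambda>b. W a b * (q a * - log 2 (q a))) has_sum (1 * (q a * - log 2 (q a)))) UNIV"
      by (intro has_sum_cmult_left is_channel_has_sum[OF assms(2) \<open>a \<in> A\<close>])
    moreover have "q a * W a b * infdens A W q a b \<le> W a b * (q a * - log 2 (q a))" for b
    proof -
      have "q a * W a b * infdens A W q a b \<le> q a * W a b * - log 2 (q a)"
        unfolding infdens_eq_log_ratio
        by (rule mult_left_mono[OF log_ratio_le_minus_log[OF \<open>0 < q a\<close>
            dists_le_1[OF assms(1,3) \<open>a \<in> A\<close>] outdist_ge[OF assms \<open>a \<in> A\<close>]]])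
          (use \<open>0 < q a\<close> is_channel_nonneg[OF assms(2) \<open>a \<in> A\<close>] in simp)
      then show ?thesis by (simp add: mult_ac)
    qed
    ultimately show ?thesis
      using has_sum_infsum[OF infdens_term_summable[OF assms \<open>a \<in> A\<close>]]
      by (simp add: has_sum_mono)
  qed
qed

lemma mutinf_le_log_card:
  assumes "finite A" "A \<noteq> {}" "is_channel A W" "q \<in> dists A"
  shows "mutinf A W q \<le> log 2 (real (card A))"
  using mutinf_le_entropy[OF assms(1,3,4)] entropy_le_log_card[OF assms(1,2,4)] by linarith

(* The joint law p a * W a b with its output marginal p W replaced by r W, on the support of p W.
   It collects the remainder terms when D(p W || r W) >= 0 is proved termwise. *)
definition output_reweighted ::
    "'a set \<Rightarrow> ('a \<Rightarrow> 'b \<Rightarrow> real) \<Rightarrow> ('a \<Rightarrow> real) \<Rightarrow> ('a \<Rightarrow> real) \<Rightarrow> 'a \<Rightarrow> 'b \<Rightarrow> real" where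
  "output_reweighted A W p r a b = p a * W a b / outdist A W p b * outdist A W r b"

lemma output_reweighted_bounds:
  assumes "finite A" "is_channel A W" "p \<in> dists A" "r \<in> dists A" "a \<in> A"
  shows "0 \<le> output_reweighted A W p r a b \<and> output_reweighted A W p r a b \<le> outdist A W r b"
proof -
  have "0 \<le> p a * W a b" "p a * W a b \<le> outdist A W p b" "0 \<le> outdist A W r b"
    using dists_nonneg[OF assms(3,5)] is_channel_nonneg[OF assms(2,5)] outdist_ge[OF assms(1-3,5)]
      outdist_nonneg[OF assms(2,4)] by auto
  then have "0 \<le> p a * W a b / outdist A W p b" "p a * W a b / outdist A W p b \<le> 1"
    by (auto simp: divide_le_eq_1)
  then show ?thesis unfolding output_reweighted_def using \<open>0 \<le> outdist A W r b\<close>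
    by (intro conjI mult_nonneg_nonneg mult_left_le_one_le)
qed

lemma output_reweighted_summable:
  assumes "finite A" "is_channel A W" "p \<in> dists A" "r \<in> dists A" "a \<in> A"
  shows "output_reweighted A W p r a summable_on UNIV"
  using output_reweighted_bounds[OF assms]
  by (intro summable_on_comparison_test[OF has_sum_imp_summable[OF outdist_has_sum[OF assms(1,2,4)]]])
    auto

lemma sum_output_reweighted_le_1:
  assumes "finite A" "is_channel A W" "p \<in> dists A" "r \<in> dists A"
  shows "(\<Sum>a\<in>A. \<Sum>\<^sub>\<infinity>b. output_reweighted A W p r a b) \<le> 1"
proof (rule has_sum_mono[OF has_sum_sum outdist_has_sum[OF assms(1,2,4)]])
  show "(output_reweighted A W p r a has_sum (\<Sum>\<^sub>\<infinity>b. output_reweighted A W p r a b)) UNIV"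
    if "a \<in> A" for a
    using output_reweighted_summable[OF assms that] by simp
  fix b
  have "(\<Sum>a\<in>A. output_reweighted A W p r a b)
      = (\<Sum>a\<in>A. p a * W a b) / outdist A W p b * outdist A W r b"
    unfolding output_reweighted_def
    by (simp only: sum_distrib_right[symmetric] sum_divide_distrib[symmetric])
  also have "\<dots> = outdist A W p b / outdist A W p b * outdist A W r b"
    unfolding outdist_def ..
  also have "\<dots> \<le> outdist A W r b" using outdist_nonneg[OF assms(2,4)] by simp
  finally show "(\<Sum>a\<in>A. output_reweighted A W p r a b) \<le> outdist A W r b" .
qed (fact assms(1))

(* With r = (1 - d) p + d u, the u-part of the term of I(W, r) is bounded below termwise as in
   D(W a || r W) >= 0, and its p-part as in I(W, p) + D(p W || r W). *)
lemma infdens_mixture_term_ge: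
  assumes fin: "finite A" and ch: "is_channel A W" and p: "p \<in> dists A" and u: "u \<in> dists A"
    and d: "0 \<le> d" "d \<le> 1" and a: "a \<in> A"
  defines "r \<equiv> \<lambda>x. (1 - d) * p x + d * u x"
  shows "(1 - d) * (p a * W a b * infdens A W p a b
            + (p a * W a b - output_reweighted A W p r a b) / ln 2)
          + d * u a * (W a b - outdist A W r b) / ln 2
         \<le> r a * W a b * infdens A W r a b"
proof -
  have W: "0 \<le> W a b" by (rule is_channel_nonneg[OF ch a])
  have rW: "r a * W a b \<le> outdist A W r b"
    by (rule outdist_ge[OF fin ch _ a]) (unfold r_def, rule mixture_in_dists[OF fin p u d])
  have "(1 - d) * p a \<le> r a" "d * u a \<le> r a"
    using dists_nonneg[OF p a] dists_nonneg[OF u a] d unfolding r_def by auto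
  then have "(1 - d) * p a * W a b \<le> outdist A W r b" "d * u a * W a b \<le> outdist A W r b"
    using rW W by (meson mult_right_mono order_trans)+
  then have "(1 - d) * (p a * W a b * log_ratio (W a b) (outdist A W p b)
               + (p a * W a b - p a * W a b / outdist A W p b * outdist A W r b) / ln 2)
             + d * u a * (W a b - outdist A W r b) / ln 2
           \<le> (1 - d) * p a * W a b * log_ratio (W a b) (outdist A W r b)
             + d * u a * W a b * log_ratio (W a b) (outdist A W r b)"
    using d dists_nonneg[OF p a] dists_nonneg[OF u a] W outdist_ge[OF fin ch p a]
    by (intro add_mono mult_log_ratio_change_reference mult_log_ratio_ge_diff) auto
  then show ?thesis
    unfolding infdens_eq_log_ratio output_reweighted_def
    by (simp add: r_def algebra_simps)
qed

lemma infsum_infdens_mixture_ge: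
  assumes fin: "finite A" and ch: "is_channel A W" and p: "p \<in> dists A" and u: "u \<in> dists A"
    and d: "0 \<le> d" "d \<le> 1" and a: "a \<in> A"
  defines "r \<equiv> \<lambda>x. (1 - d) * p x + d * u x"
  shows "(1 - d) * ((\<Sum>\<^sub>\<infinity>b. p a * W a b * infdens A W p a b)
            + (p a - (\<Sum>\<^sub>\<infinity>b. output_reweighted A W p r a b)) / ln 2)
         \<le> (\<Sum>\<^sub>\<infinity>b. r a * W a b * infdens A W r a b)"
proof -
  have r: "r \<in> dists A" unfolding r_def by (rule mixture_in_dists[OF fin p u d])
  have "((\<lambda>b. (1 - d) * (p a * W a b * infdens A W p a b
                  + (p a * W a b - output_reweighted A W p r a b) / ln 2)
              + d * u a * (W a b - outdist A W r b) / ln 2) has_sum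
          ((1 - d) * ((\<Sum>\<^sub>\<infinity>b. p a * W a b * infdens A W p a b)
              + (p a * 1 - (\<Sum>\<^sub>\<infinity>b. output_reweighted A W p r a b)) / ln 2)
            + d * u a * (1 - 1) / ln 2)) UNIV"
    using infdens_term_summable[OF fin ch p a] is_channel_has_sum[OF ch a]
      output_reweighted_summable[OF fin ch p r a] outdist_has_sum[OF fin ch r]
    by (intro has_sum_add has_sum_cmult_right has_sum_divide_const has_sum_diff) auto
  moreover have "((\<lambda>b. r a * W a b * infdens A W r a b) has_sum
                  (\<Sum>\<^sub>\<infinity>b. r a * W a b * infdens A W r a b)) UNIV"
    using infdens_term_summable[OF fin ch r a] by simp
  ultimately show ?thesis
    using infdens_mixture_term_ge[OF fin ch p u d a] unfolding r_def by (simp add: has_sum_mono)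
qed

lemma mutinf_mixture_ge:
  assumes fin: "finite A" and ch: "is_channel A W" and p: "p \<in> dists A" and u: "u \<in> dists A"
    and d: "0 \<le> d" "d \<le> 1"
  shows "(1 - d) * mutinf A W p \<le> mutinf A W (\<lambda>x. (1 - d) * p x + d * u x)"
proof -
  define r where "r = (\<lambda>x. (1 - d) * p x + d * u x)"
  have r: "r \<in> dists A" unfolding r_def by (rule mixture_in_dists[OF fin p u d])
  define sp where "sp a = (\<Sum>\<^sub>\<infinity>b. p a * W a b * infdens A W p a b)" for a
  define G where "G a = (\<Sum>\<^sub>\<infinity>b. output_reweighted A W p r a b)" for a
  have "(1 - d) * mutinf A W p \<le> (1 - d) * (mutinf A W p + (1 - (\<Sum>a\<in>A. G a)) / ln 2)"
    using sum_output_reweighted_le_1[OF fin ch p r] d unfolding G_def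
    by (intro mult_left_mono) auto
  also have "\<dots> = (1 - d) * ((\<Sum>a\<in>A. sp a) + ((\<Sum>a\<in>A. p a) - (\<Sum>a\<in>A. G a)) / ln 2)"
    using p unfolding mutinf_eq_sum[OF fin ch p] sp_def dists_def by simp
  also have "\<dots> = (\<Sum>a\<in>A. (1 - d) * (sp a + (p a - G a) / ln 2))"
    by (simp only: sum_distrib_left[symmetric] sum.distrib sum_subtractf sum_divide_distrib[symmetric])
  also have "\<dots> \<le> (\<Sum>a\<in>A. \<Sum>\<^sub>\<infinity>b. r a * W a b * infdens A W r a b)"
    unfolding sp_def G_def r_def
    by (intro sum_mono infsum_infdens_mixture_ge[OF fin ch p u d])
  also have "\<dots> = mutinf A W r"
    by (rule mutinf_eq_sum[OF fin ch r, symmetric])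
  finally show ?thesis unfolding r_def .
qed

lemma mutinf_le_capacity:
  assumes "finite A" "A \<noteq> {}" "is_channel A W" "q \<in> dists A"
  shows "mutinf A W q \<le> capacity A W"
  unfolding capacity_def
  by (rule cSUP_upper[OF assms(4) bdd_aboveI2[OF mutinf_le_log_card[OF assms(1-3)]]])

lemma capacity_uniform_mixture_gap:
  assumes "finite A" "A \<noteq> {}" "is_channel A W" "p \<in> dists A" "mutinf A W p = capacity A W"
    and "0 \<le> d" "d \<le> 1"
  defines "r \<equiv> \<lambda>x. (1 - d) * p x + d / real (card A)"
  shows "0 \<le> capacity A W - mutinf A W r"
    and "capacity A W - mutinf A W r \<le> d * log 2 (real (card A))"
proof -
  have r_mixture: "r = (\<lambda>x. (1 - d) * p x + d * (1 / real (card A)))"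
    unfolding r_def by simp
  have "r \<in> dists A"
    unfolding r_mixture using assms by (intro mixture_in_dists uniform_in_dists)
  then show "0 \<le> capacity A W - mutinf A W r"
    using mutinf_le_capacity assms by simp
  have "(1 - d) * capacity A W \<le> mutinf A W r"
    unfolding r_mixture assms(5)[symmetric] using assms
    by (intro mutinf_mixture_ge uniform_in_dists)
  moreover have "d * capacity A W \<le> d * log 2 (real (card A))"
    unfolding assms(5)[symmetric] using assms by (intro mult_left_mono mutinf_le_log_card)
  ultimately show "capacity A W - mutinf A W r \<le> d * log 2 (real (card A))"
    by (simp add: algebra_simps)
qed

lemma phi_nonneg:
  assumes "A \<noteq> {}" "is_channel A W"
  shows "0 \<le> phi A W"
proof (cases "0 < minprob A W")
  case True
  obtain a where a: "a \<in> A" using assms by auto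
  have "W a \<noteq> (\<lambda>_. 0)"
    using has_sum_unique[OF is_channel_has_sum[OF assms(2) a], of 0] by auto
  then obtain b where b: "W a b \<noteq> 0" by auto
  have "W a b \<in> {W a b |a b. a \<in> A \<and> W a b \<noteq> 0}" using a b by blast
  moreover have "bdd_below {W a b |a b. a \<in> A \<and> W a b \<noteq> 0}"
    by (rule bdd_belowI[of _ 0]) (use is_channel_nonneg[OF assms(2)] in auto)
  ultimately have "minprob A W \<le> W a b" unfolding minprob_def by (rule cInf_lower)
  also have "\<dots> \<le> 1" by (rule is_channel_le_1[OF assms(2) a])
  finally show ?thesis using True unfolding phi_def by simp
next
  case False
  then show ?thesis unfolding phi_def by simp
qed

lemma finite_seqs: "finite (seqs n :: 'a::finite list set)"
  using finite_lists_length_eq[of "UNIV :: 'a set" n] by (simp add: seqs_def)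

lemma card_seqs: "card (seqs n :: 'a::finite list set) = CARD('a) ^ n"
  using card_lists_length_eq[of "UNIV :: 'a set" n] by (simp add: seqs_def)

lemma seqs_nonempty: "seqs n \<noteq> {}"
proof -
  have "replicate n undefined \<in> seqs n" unfolding seqs_def by simp
  then show ?thesis by auto
qed

lemma capacity_gap_seqs:
  fixes W :: "'a::finite list \<Rightarrow> 'b \<Rightarrow> real"
  assumes "is_channel (seqs n) W" "p \<in> dists (seqs n)" "mutinf (seqs n) W p = capacity (seqs n) W"
    and "0 \<le> d" "d \<le> 1"
  shows "\<bar>capacity (seqs n) W - mutinf (seqs n) W (\<lambda>x. (1 - d) * p x + d / real (CARD('a) ^ n))\<bar>
           \<le> log 2 (real CARD('a)) * (d * real n)"
proof -
  have "log 2 (real (card (seqs n :: 'a list set))) = real n * log 2 (real CARD('a))"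
    unfolding card_seqs of_nat_power by (simp add: log_nat_power)
  then show ?thesis
    using capacity_uniform_mixture_gap[OF finite_seqs seqs_nonempty assms] unfolding card_seqs
    by (simp add: mult_ac)
qed

lemma ereal_abs_le_mult_add:
  fixes x C e r :: real and f :: ereal
  assumes "\<bar>x\<bar> \<le> C * (e * r)" "0 \<le> C" "0 \<le> e" "0 \<le> f"
  shows "ereal \<bar>x\<bar> \<le> ereal C * (ereal e * (ereal r + f))"
proof (cases f)
  case (real s)
  have "C * (e * r) \<le> C * (e * (r + s))"
    using assms real by (intro mult_left_mono) auto
  then show ?thesis using assms real by simp
next
  case PInf
  show ?thesis
  proof (cases "C = 0 \<or> e = 0")
    case True
    then have "x = 0" using assms(1) by auto
    then show ?thesis using True PInf by auto
  next
    case False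
    then have "0 < C" "0 < e" using assms by auto
    then show ?thesis using PInf by simp
  qed
next
  case MInf
  then show ?thesis using assms by simp
qed

lemma Lim_null_divide_real_comparison:
  fixes g e :: "nat \<Rightarrow> real"
  assumes "\<And>n. \<bar>g n\<bar> \<le> C * (e n * real n)" "e \<longlonglongrightarrow> 0"
  shows "(\<lambda>n. g n / real n) \<longlonglongrightarrow> 0"
proof (rule Lim_null_comparison[OF _ tendsto_mult_right_zero[OF assms(2), of C]])
  have "\<bar>g n / real n\<bar> \<le> C * e n" if "n > 0" for n
    using assms(1)[of n] that by (simp add: divide_le_eq mult_ac)
  then show "\<forall>\<^sub>F n in sequentially. norm (g n / real n) \<le> C * e n"
    by (auto intro: eventually_sequentiallyI[of 1])
qed

theorem proposition8:
  fixes V :: "nat \<Rightarrow> ('a::finite) list \<Rightarrow> ('b::countable) \<Rightarrow> real"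
    and pbar :: "nat \<Rightarrow> 'a list \<Rightarrow> real"
    and \<delta> :: "nat \<Rightarrow> real"
    and phat :: "nat \<Rightarrow> 'a list \<Rightarrow> real"
  assumes chan: "\<And>n. is_channel (seqs n) (V n)"
    and pbar_dist: "\<And>n. pbar n \<in> dists (seqs n)"
    and pbar_opt: "\<And>n. mutinf (seqs n) (V n) (pbar n) = capacity (seqs n) (V n)"
    and delta_range: "\<And>n. 0 \<le> \<delta> n \<and> \<delta> n \<le> 1"
    and phat_def: "\<And>n x. phat n x = (1 - \<delta> n) * pbar n x + \<delta> n / real (CARD('a) ^ n)"
  shows "(\<exists>C. \<forall>\<^sub>F n in sequentially.
            ereal \<bar>capacity (seqs n) (V n) - mutinf (seqs n) (V n) (phat n)\<bar>
              \<le> ereal C * (ereal (\<delta> n) * (ereal (real n) + phi (seqs n) (V n))))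
       \<and> (\<forall>L. (\<lambda>n. ereal (\<delta> n) * phi (seqs n) (V n)) \<longlonglongrightarrow> 0
              \<longrightarrow> \<delta> \<longlonglongrightarrow> 0
              \<longrightarrow> (\<lambda>n. capacity (seqs n) (V n) / real n) \<longlonglongrightarrow> L
              \<longrightarrow> (\<lambda>n. mutinf (seqs n) (V n) (phat n) / real n) \<longlonglongrightarrow> L)
       \<and> ((\<lambda>n. ereal (\<delta> n) * phi (seqs n) (V n)) \<longlonglongrightarrow> 0
              \<longrightarrow> (\<lambda>n. \<delta> n * real n) \<longlonglongrightarrow> 0
              \<longrightarrow> (\<lambda>n. capacity (seqs n) (V n) - mutinf (seqs n) (V n) (phat n)) \<longlonglongrightarrow> 0)"
proof -
  define C where "C = log 2 (real CARD('a))"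
  define gap where "gap n = capacity (seqs n) (V n) - mutinf (seqs n) (V n) (phat n)" for n
  have "0 \<le> C" unfolding C_def by (simp add: Suc_leI)
  have phat_eq: "phat n = (\<lambda>x. (1 - \<delta> n) * pbar n x + \<delta> n / real (CARD('a) ^ n))" for n
    by (rule ext) (rule phat_def)
  have gap_bound: "\<bar>gap n\<bar> \<le> C * (\<delta> n * real n)" for n
    unfolding gap_def C_def phat_eq
    by (rule capacity_gap_seqs[OF chan pbar_dist pbar_opt conjunct1[OF delta_range]
          conjunct2[OF delta_range]])
  show ?thesis
    unfolding gap_def[symmetric]
  proof (intro conjI allI impI)
    show "\<exists>C. \<forall>\<^sub>F n in sequentially.
            ereal \<bar>gap n\<bar> \<le> ereal C * (ereal (\<delta> n) * (ereal (real n) + phi (seqs n) (V n)))"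
      using delta_range \<open>0 \<le> C\<close>
      by (intro exI[of _ C] always_eventually allI ereal_abs_le_mult_add[OF gap_bound]
          phi_nonneg[OF seqs_nonempty chan]) simp_all
  next
    fix L
    assume "\<delta> \<longlonglongrightarrow> 0" and cap: "(\<lambda>n. capacity (seqs n) (V n) / real n) \<longlonglongrightarrow> L"
    from tendsto_diff[OF cap Lim_null_divide_real_comparison[OF gap_bound \<open>\<delta> \<longlonglongrightarrow> 0\<close>]]
    show "(\<lambda>n. mutinf (seqs n) (V n) (phat n) / real n) \<longlonglongrightarrow> L"
      unfolding gap_def by (simp add: diff_divide_distrib)
  next
    assume scaled: "(\<lambda>n. \<delta> n * real n) \<longlonglongrightarrow> 0"
    show "gap \<longlonglongrightarrow> 0"
      by (rule Lim_null_comparison[OF _ tendsto_mult_right_zero[OF scaled, of C]])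
        (use gap_bound in \<open>simp add: always_eventually\<close>)
  qed
qed

end
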